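(* Let $\mu>0$ and let $\eta:\mathbb{R}^n\to\mathbb{R}^n$ be the element-wise symmetric clipping operator, $\eta(\boldsymbol{u})_j=-\mu$ if $u_j\le-\mu$, $\eta(\boldsymbol{u})_j=u_j$ if $u_j\in(-\mu,\mu)$, $\eta(\boldsymbol{u})_j=\mu$ if $u_j\ge\mu$. For any two cones $\mathcal{X},\mathcal{X}'\subseteq\mathbb{R}^n$ with $\mathcal{X}\neq\mathcal{X}'$, we have $\eta(\mathcal{X})\neq\eta(\mathcal{X}')$, where $\eta(\mathcal{X})=\{\eta(\boldsymbol{x}):\boldsymbol{x}\in\mathcal{X}\}$.
   Context: A set $\mathcal{X}\subseteq\mathbb{R}^n$ is a cone (scale invariant) if $g\mathcal{X}=\mathcal{X}$ for all $g\in\mathbb{R}^*_+=(0,\infty)$, where $g\mathcal{X}=\{g\boldsymbol{x}:\boldsymbol{x}\in\mathcal{X}\}$. *)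

theory Defs
  imports "HOL-Analysis.Analysis"
begin

definition is_cone :: "(real ^ 'n) set \<Rightarrow> bool" where
  "is_cone X \<longleftrightarrow> (\<forall>g::real. g > 0 \<longrightarrow> (\<lambda>x. g *\<^sub>R x) ` X = X)"

definition clip :: "real \<Rightarrow> real ^ 'n \<Rightarrow> real ^ 'n" where
  "clip \<mu> u = (\<chi> j. if u $ j \<le> - \<mu> then - \<mu>
                     else if u $ j \<ge> \<mu> then \<mu> else u $ j)"

end

theory Submission
  imports Defs
begin

(* Clipping fixes every point of the open ball of radius mu, and a point it moves
   acquires a coordinate +-mu and so lands outside that ball; hence clip mu ` X and X
   agree on the ball. A cone is determined by its intersection with any ball around
   the origin, since every point can be scaled into the ball. *)

lemma cone_scaleR_mem_iff:
  assumes "is_cone X" "g > 0"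
  shows "g *\<^sub>R x \<in> X \<longleftrightarrow> x \<in> X"
proof
  have image_eq: "(\<lambda>x. g *\<^sub>R x) ` X = X"
    using assms unfolding is_cone_def by blast
  show "x \<in> X \<Longrightarrow> g *\<^sub>R x \<in> X"
    using image_eq by blast
  assume "g *\<^sub>R x \<in> X"
  then obtain y where "y \<in> X" "g *\<^sub>R x = g *\<^sub>R y"
    using image_eq by (metis imageE)
  then show "x \<in> X"
    using \<open>g > 0\<close> by simp
qed

lemma cone_eq_if_Int_ball_eq:
  fixes X X' :: "(real ^ 'n) set"
  assumes "is_cone X" "is_cone X'" "r > 0" "X \<inter> ball 0 r = X' \<inter> ball 0 r"
  shows "X = X'"
proof -
  have "x \<in> X \<longleftrightarrow> x \<in> X'" for x
  proof -
    define t where "t = r / (norm x + 1)"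
    have t_pos: "t > 0"
      using \<open>r > 0\<close> by (simp add: t_def add_nonneg_pos)
    have "norm (t *\<^sub>R x) = r * norm x / (norm x + 1)"
      using t_pos \<open>r > 0\<close> by (simp add: t_def)
    also have "\<dots> < r"
      using \<open>r > 0\<close> by (simp add: divide_less_eq add_nonneg_pos)
    finally have "t *\<^sub>R x \<in> ball 0 r"
      by simp
    then show ?thesis
      using assms(4) cone_scaleR_mem_iff[OF assms(1) t_pos]
        cone_scaleR_mem_iff[OF assms(2) t_pos] by blast
  qed
  then show ?thesis
    by blast
qed

lemma clip_eq_self:
  assumes "\<forall>j. \<bar>u $ j\<bar> < \<mu>"
  shows "clip \<mu> u = u"
proof -
  have "clip \<mu> u $ j = u $ j" for j
    using assms[rule_format, of j] by (simp add: clip_def abs_less_iff)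
  then show ?thesis
    by (simp add: vec_eq_iff)
qed

lemma clip_eq_self_if_clip_inside:
  assumes "\<forall>j. \<bar>clip \<mu> u $ j\<bar> < \<mu>"
  shows "clip \<mu> u = u"
proof -
  have "clip \<mu> u $ j = u $ j" for j
    using assms[rule_format, of j] by (auto simp: clip_def split: if_splits)
  then show ?thesis
    by (simp add: vec_eq_iff)
qed

lemma clip_image_Int_ball:
  "clip \<mu> ` X \<inter> ball 0 \<mu> = X \<inter> ball 0 \<mu>"
proof -
  have components_inside: "\<forall>j. \<bar>v $ j\<bar> < \<mu>" if "v \<in> ball 0 \<mu>" for v :: "real ^ 'n"
    using that component_le_norm_cart[of v] by (auto intro: le_less_trans)
  show ?thesis
  proof
    show "clip \<mu> ` X \<inter> ball 0 \<mu> \<subseteq> X \<inter> ball 0 \<mu>"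
      using components_inside clip_eq_self_if_clip_inside by fastforce
    show "X \<inter> ball 0 \<mu> \<subseteq> clip \<mu> ` X \<inter> ball 0 \<mu>"
      using components_inside clip_eq_self by (metis IntE IntI image_eqI subsetI)
  qed
qed

theorem proposition2:
  fixes \<mu> :: real and X X' :: "(real ^ 'n) set"
  assumes "\<mu> > 0"
    and "is_cone X" and "is_cone X'"
    and "X \<noteq> X'"
  shows "clip \<mu> ` X \<noteq> clip \<mu> ` X'"
proof -
  have "X \<inter> ball 0 \<mu> \<noteq> X' \<inter> ball 0 \<mu>"
    using cone_eq_if_Int_ball_eq assms by blast
  then show ?thesis
    using clip_image_Int_ball by metis
qed

end
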